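(* Fix $q\in(2,4]$ and $\vartheta>0$. Any arclength parametrized (hence length one) injective regular closed curve $\Gamma\in W^{2,2}(\mathbb{R}/\mathbb{Z},\mathbb{R}^3)$ which is a critical point of $S_\vartheta$ satisfies $$DE_\vartheta(\Gamma)+\lambda\,D\mathscr{L}(\Gamma)=0$$ with Lagrange multiplier $\lambda:=E_\vartheta(\Gamma)$. Moreover, any arclength parametrized curve $\Gamma$ which is critical for the problem of minimizing $E_\vartheta$ on $\mathscr{C}(\mathcal{K})$ (for a knot class $\mathcal{K}$) satisfies the same equation with the same $\lambda=E_\vartheta(\Gamma)$.
   Context: $\mathscr{L}$ is length; $E(\gamma)=\int_\gamma\kappa^2ds$; $\mathrm{TP}_q(\gamma)=\iint_{(\mathbb{R}/\mathbb{Z})^2} r_{tp}(\gamma(s),\gamma(t))^{-q}|\gamma'(s)||\gamma'(t)|\,ds\,dt$ with $r_{tp}(\gamma(s),\gamma(t))$ the radius of the circle through $\gamma(s),\gamma(t)$ tangent to $\gamma$ at $\gamma(s)$; $E_\vartheta=E+\vartheta\mathrm{TP}_q^{1/(q-2)}$, $S_\vartheta=\mathscr{L}\cdot E_\vartheta$; these are continuously differentiable on the open subset of $W^{2,2}(\mathbb{R}/\mathbb{Z},\mathbb{R}^3)$ of injective regular closed curves, with Fréchet derivatives $D$ acting on $h\in W^{2,2}(\mathbb{R}/\mathbb{Z},\mathbb{R}^3)$. $\mathscr{C}(\mathcal{K})=\{\gamma\in W^{2,2}(\mathbb{R}/\mathbb{Z},\mathbb{R}^3):\mathscr{L}(\gamma)=1,|\gamma'|>0,\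 \gamma\text{ embedded of knot type }\mathcal{K}\}$; critical for the constrained problem means $DE_\vartheta(\Gamma)+\mu D\mathscr{L}(\Gamma)=0$ for some $\mu\in\mathbb{R}$. *)

theory Defs
  imports "HOL-Analysis.Analysis"
begin

type_synonym curve = "real \<Rightarrow> real^3"

text \<open>Closed curves are 1-periodic maps on the real line (i.e. maps on R/Z).\<close>

definition d1 :: "curve \<Rightarrow> real \<Rightarrow> real^3" where
  "d1 \<gamma> t = vector_derivative \<gamma> (at t)"

definition d2 :: "curve \<Rightarrow> real \<Rightarrow> real^3" where
  "d2 \<gamma> t = vector_derivative (d1 \<gamma>) (at t)"

definition W22 :: "curve set" where
  "W22 = {\<gamma>. (\<forall>t. \<gamma> (t + 1) = \<gamma> t)
      \<and> (\<forall>t. \<gamma> differentiable (at t))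
      \<and> (\<exists>g. g absolutely_integrable_on {0..1}
             \<and> (\<lambda>t. (norm (g t))\<^sup>2) integrable_on {0..1}
             \<and> (\<forall>t\<in>{0..1}. d1 \<gamma> t = d1 \<gamma> 0 + integral {0..t} g))}"

definition W22_norm :: "curve \<Rightarrow> real" where
  "W22_norm h = sqrt (integral {0..1}
      (\<lambda>t. (norm (h t))\<^sup>2 + (norm (d1 h t))\<^sup>2 + (norm (d2 h t))\<^sup>2))"

definition has_frechet_W22 :: "(curve \<Rightarrow> real) \<Rightarrow> curve \<Rightarrow> (curve \<Rightarrow> real) \<Rightarrow> bool" where
  "has_frechet_W22 F \<gamma> A \<longleftrightarrow>
     (\<forall>h\<in>W22. \<forall>k\<in>W22. \<forall>a b. A (\<lambda>t. a *\<^sub>R h t + b *\<^sub>R k t) = a * A h + b * A k)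
     \<and> (\<exists>C. \<forall>h\<in>W22. \<bar>A h\<bar> \<le> C * W22_norm h)
     \<and> (\<forall>\<epsilon>>0. \<exists>\<delta>>0. \<forall>h\<in>W22. W22_norm h < \<delta> \<longrightarrow>
           \<bar>F (\<lambda>t. \<gamma> t + h t) - F \<gamma> - A h\<bar> \<le> \<epsilon> * W22_norm h)"

definition frechet_differentiable_W22 :: "(curve \<Rightarrow> real) \<Rightarrow> curve \<Rightarrow> bool" where
  "frechet_differentiable_W22 F \<gamma> \<longleftrightarrow> (\<exists>A. has_frechet_W22 F \<gamma> A)"

text \<open>The Frechet derivative DF(\<gamma>) (meaningful on W22 when F is differentiable at \<gamma>).\<close>
definition FD :: "(curve \<Rightarrow> real) \<Rightarrow> curve \<Rightarrow> curve \<Rightarrow> real" where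
  "FD F \<gamma> = (SOME A. has_frechet_W22 F \<gamma> A)"

definition injective_regular_closed :: "curve \<Rightarrow> bool" where
  "injective_regular_closed \<gamma> \<longleftrightarrow> \<gamma> \<in> W22 \<and> inj_on \<gamma> {0..<1} \<and> (\<forall>t. norm (d1 \<gamma> t) > 0)"

definition arclength_param :: "curve \<Rightarrow> bool" where
  "arclength_param \<gamma> \<longleftrightarrow> (\<forall>t. norm (d1 \<gamma> t) = 1)"

definition curve_length :: "curve \<Rightarrow> real" where
  "curve_length \<gamma> = integral {0..1} (\<lambda>t. norm (d1 \<gamma> t))"

text \<open>Bending energy: integral of kappa^2 ds, with kappa = |g' x g''| / |g'|^3.\<close>
definition bending :: "curve \<Rightarrow> real" where
  "bending \<gamma> = integral {0..1}
     (\<lambda>t. (norm (cross3 (d1 \<gamma> t) (d2 \<gamma> t)) / norm (d1 \<gamma> t) ^ 3)\<^sup>2 * norm (d1 \<gamma> t))"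

definition inv_rtp :: "curve \<Rightarrow> real \<Rightarrow> real \<Rightarrow> real" where
  "inv_rtp \<gamma> s t = 2 * norm (cross3 (d1 \<gamma> s) (\<gamma> t - \<gamma> s))
                      / (norm (d1 \<gamma> s) * (norm (\<gamma> t - \<gamma> s))\<^sup>2)"

definition tangent_point :: "real \<Rightarrow> curve \<Rightarrow> real" where
  "tangent_point q \<gamma> = integral (cbox (0,0) (1,1))
     (\<lambda>(s,t). (inv_rtp \<gamma> s t) powr q * norm (d1 \<gamma> s) * norm (d1 \<gamma> t))"

definition E_theta :: "real \<Rightarrow> real \<Rightarrow> curve \<Rightarrow> real" where
  "E_theta q \<theta> \<gamma> = bending \<gamma> + \<theta> * (tangent_point q \<gamma>) powr (1 / (q - 2))"

definition S_theta :: "real \<Rightarrow> real \<Rightarrow> curve \<Rightarrow> real" where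
  "S_theta q \<theta> \<gamma> = curve_length \<gamma> * E_theta q \<theta> \<gamma>"

text \<open>The admissible class C(K); a knot class K is represented as a set of curves.\<close>
definition admissible_class :: "curve set \<Rightarrow> curve set" where
  "admissible_class K = {\<gamma>. injective_regular_closed \<gamma> \<and> curve_length \<gamma> = 1 \<and> \<gamma> \<in> K}"

end

theory Submission
  imports Defs
begin

(* Frechet derivatives on W22 are determined by the one-sided directional derivatives
   t -> F (Gamma + t h) at 0+. For S = L * E this gives the product rule, so DS(Gamma) = 0 reads
   L(Gamma) DE(Gamma) h + E(Gamma) DL(Gamma) h = 0 with L(Gamma) = 1. For the constrained problem,
   test the Lagrange equation with h = Gamma: under dilation bending scales like 1/c and TP_q like
   c^(2-q), so E_theta is homogeneous of degree -1 and L of degree 1, and Euler's identity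
   DF(Gamma) Gamma = p F(Gamma) turns the equation into mu = E_theta(Gamma).
   The second derivative in the W22 norm is a pointwise derivative, so the scaling of that norm
   needs Lebesgue's differentiation theorem for the indefinite integral defining d1. *)

section \<open>Lebesgue differentiation on the real line\<close>

lemma integral_right_quotient_tendsto_ae:
  fixes f :: "real \<Rightarrow> 'a::euclidean_space"
  assumes "\<And>a b. f integrable_on {a..b}"
  obtains N where "negligible N"
    "\<And>x. x \<notin> N \<Longrightarrow> ((\<lambda>h. norm (integral {x..x + h} f /\<^sub>R h - f x)) \<longlongrightarrow> 0) (at_right 0)"
proof -
  obtain N where N: "negligible N" and lim: "\<And>x e. \<lbrakk>x \<notin> N; 0 < e\<rbrakk> \<Longrightarrow>
      \<exists>d>0. \<forall>h. 0 < h \<and> h < d \<longrightarrow>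
        norm (integral (cbox x (x + h *\<^sub>R One)) f /\<^sub>R h ^ DIM(real) - f x) < e"
    using integrable_ccontinuous_explicit[of f] assms by auto
  have "((\<lambda>h. norm (integral {x..x + h} f /\<^sub>R h - f x)) \<longlongrightarrow> 0) (at_right 0)" if x: "x \<notin> N" for x
  proof (rule tendstoI)
    fix e :: real assume "e > 0"
    then obtain d where "d > 0"
      and "\<forall>h. 0 < h \<and> h < d \<longrightarrow> norm (integral {x..x + h} f /\<^sub>R h - f x) < e"
      using lim[OF x \<open>e > 0\<close>] by auto
    then show "\<forall>\<^sub>F h in at_right 0. dist (norm (integral {x..x + h} f /\<^sub>R h - f x)) 0 < e"
      unfolding eventually_at_right_field by (intro exI[of _ d]) auto
  qed
  with N that show ?thesis by blast
qed

lemma indefinite_integral_has_vector_derivative_ae: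
  fixes f :: "real \<Rightarrow> 'a::euclidean_space"
  assumes f: "f integrable_on {a..b}"
  obtains N where "negligible N"
    "\<And>x. x \<in> {a<..<b} - N \<Longrightarrow> ((\<lambda>x. integral {a..x} f) has_vector_derivative f x) (at x)"
proof -
  txt \<open>\<open>integrable_ccontinuous_explicit\<close> only controls right difference quotients; the
    left ones are right quotients of the reflected function \<open>\<lambda>x. g (- x)\<close>.\<close>
  define g where "g x = (if x \<in> {a..b} then f x else 0)" for x
  have "g integrable_on UNIV"
    unfolding g_def using integrable_restrict_UNIV f by blast
  then have g: "g integrable_on {c..d}" for c d
    by (rule integrable_on_subinterval) auto
  have g_reflect: "(\<lambda>x. g (- x)) integrable_on {c..d}" for c d
    using g[of "-d" "-c"]
      Henstock_Kurzweil_Integration.integrable_reflect_real[where f=g and a="-d" and b="-c"]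
    by simp
  obtain N1 where N1: "negligible N1" and right: "\<And>x. x \<notin> N1 \<Longrightarrow>
      ((\<lambda>h. norm (integral {x..x + h} g /\<^sub>R h - g x)) \<longlongrightarrow> 0) (at_right 0)"
    using integral_right_quotient_tendsto_ae[OF g] by blast
  obtain N2 where N2: "negligible N2" and left: "\<And>x. x \<notin> N2 \<Longrightarrow>
      ((\<lambda>h. norm (integral {x..x + h} (\<lambda>y. g (- y)) /\<^sub>R h - g (- x))) \<longlongrightarrow> 0) (at_right 0)"
    using integral_right_quotient_tendsto_ae[OF g_reflect] by blast
  define F where "F y = integral {a..y} f" for y
  have F_diff: "F z - F y = integral {y..z} g" if "a \<le> y" "y \<le> z" "z \<le> b" for y z
  proof -
    have "integral {a..y} f + integral {y..z} f = integral {a..z} f"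
      using that
      by (intro Henstock_Kurzweil_Integration.integral_combine integrable_on_subinterval[OF f]) auto
    moreover have "integral {y..z} g = integral {y..z} f"
      using that by (intro integral_cong) (auto simp: g_def)
    ultimately show ?thesis by (simp add: F_def algebra_simps)
  qed
  have "negligible (N1 \<union> uminus ` N2)"
    using N1 N2 by (intro negligible_Un negligible_differentiable_image_negligible) auto
  moreover have "(F has_vector_derivative f x) (at x)"
    if x: "x \<in> {a<..<b} - (N1 \<union> uminus ` N2)" for x
    unfolding has_vector_derivative_def has_derivative_at
  proof (intro conjI bounded_linear_scaleR_left filterlim_split_at)
    have "x \<notin> N1" "- x \<notin> N2" using x by (auto simp: image_iff)
    have "\<forall>\<^sub>F h in at_right 0. norm (integral {x..x + h} g /\<^sub>R h - g x)
        = norm (F (x + h) - F x - h *\<^sub>R f x) / norm h"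
    proof (unfold eventually_at_right_field, intro exI conjI allI impI)
      show "b - x > 0" using x by simp
      fix h :: real assume "0 < h" "h < b - x"
      moreover have "integral {x..x + h} g - h *\<^sub>R f x = h *\<^sub>R (integral {x..x + h} g /\<^sub>R h - g x)"
        using \<open>0 < h\<close> x by (simp add: g_def algebra_simps)
      ultimately show "norm (integral {x..x + h} g /\<^sub>R h - g x)
          = norm (F (x + h) - F x - h *\<^sub>R f x) / norm h"
        using x by (simp add: F_diff)
    qed
    from Lim_transform_eventually[OF right[OF \<open>x \<notin> N1\<close>] this]
    show "((\<lambda>h. norm (F (x + h) - F x - h *\<^sub>R f x) / norm h) \<longlongrightarrow> 0) (at_right 0)" .
    have "\<forall>\<^sub>F h in at_right 0. norm (integral {- x..- x + h} (\<lambda>y. g (- y)) /\<^sub>R h - g (- (- x)))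
        = norm (F (x + - h) - F x - (- h) *\<^sub>R f x) / norm (- h)"
    proof (unfold eventually_at_right_field, intro exI conjI allI impI)
      show "x - a > 0" using x by simp
      fix h :: real assume h: "0 < h" "h < x - a"
      have "F (x + - h) - F x - (- h) *\<^sub>R f x = - (h *\<^sub>R (integral {x - h..x} g /\<^sub>R h - g x))"
        using h x F_diff[of "x - h" x] by (simp add: g_def algebra_simps)
      moreover have "integral {- x..- x + h} (\<lambda>y. g (- y)) = integral {x - h..x} g"
        using Henstock_Kurzweil_Integration.integral_reflect_real[where f=g and a="x - h" and b=x]
        by simp
      ultimately show "norm (integral {- x..- x + h} (\<lambda>y. g (- y)) /\<^sub>R h - g (- (- x)))
          = norm (F (x + - h) - F x - (- h) *\<^sub>R f x) / norm (- h)"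
        using h by simp
    qed
    from Lim_transform_eventually[OF left[OF \<open>- x \<notin> N2\<close>] this]
    show "((\<lambda>h. norm (F (x + h) - F x - h *\<^sub>R f x) / norm h) \<longlongrightarrow> 0) (at_left 0)"
      unfolding filterlim_at_left_to_right by simp
  qed
  ultimately show ?thesis using that unfolding F_def by blast
qed

section \<open>The space W22\<close>

lemma d1_eqI: "(h has_vector_derivative v) (at t) \<Longrightarrow> d1 h t = v"
  unfolding d1_def by (rule vector_derivative_at)

lemma d2_eqI: "(d1 h has_vector_derivative v) (at t) \<Longrightarrow> d2 h t = v"
  unfolding d2_def by (rule vector_derivative_at)

lemma has_vector_derivative_d1: "h differentiable (at t) \<Longrightarrow> (h has_vector_derivative d1 h t) (at t)"
  unfolding d1_def by (simp add: vector_derivative_works[symmetric])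

lemma has_vector_derivative_scaleR_const:
  "(f has_vector_derivative f') F \<Longrightarrow> ((\<lambda>x. c *\<^sub>R f x) has_vector_derivative c *\<^sub>R f') F"
  by (rule bounded_linear.has_vector_derivative[OF bounded_linear_scaleR_right])

lemma d1_scaleR:
  assumes "\<And>t. h differentiable (at t)"
  shows "d1 (\<lambda>x. c *\<^sub>R h x) = (\<lambda>x. c *\<^sub>R d1 h x)"
  using assms by (intro ext d1_eqI has_vector_derivative_scaleR_const has_vector_derivative_d1)

lemma d1_add:
  assumes "\<And>t. h differentiable (at t)" "\<And>t. k differentiable (at t)"
  shows "d1 (\<lambda>x. h x + k x) = (\<lambda>x. d1 h x + d1 k x)"
  using assms by (intro ext d1_eqI has_vector_derivative_add has_vector_derivative_d1)

lemma d2_scaleR_eqI: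
  assumes "\<And>t. h differentiable (at t)" and "(d1 h has_vector_derivative v) (at t)"
  shows "d2 (\<lambda>x. c *\<^sub>R h x) t = c *\<^sub>R v"
  unfolding d2_def d1_scaleR[OF assms(1)]
  by (intro vector_derivative_at has_vector_derivative_scaleR_const assms(2))

lemma W22_differentiable: "h \<in> W22 \<Longrightarrow> h differentiable (at t)"
  by (simp add: W22_def)

lemma W22_d1_eq_integral:
  assumes "h \<in> W22"
  obtains g where "g absolutely_integrable_on {0..1}" "(\<lambda>t. (norm (g t))\<^sup>2) integrable_on {0..1}"
    "\<And>t. t \<in> {0..1} \<Longrightarrow> d1 h 0 + integral {0..t} g = d1 h t"
proof -
  obtain g where "g absolutely_integrable_on {0..1}" "(\<lambda>t. (norm (g t))\<^sup>2) integrable_on {0..1}"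
    and rep: "\<forall>t\<in>{0..1}. d1 h t = d1 h 0 + integral {0..t} g"
    using assms unfolding W22_def by blast
  moreover have "d1 h 0 + integral {0..t} g = d1 h t" if "t \<in> {0..1}" for t
    using sym[OF bspec[OF rep that]] .
  ultimately show ?thesis
    using that by blast
qed

lemma W22_d1_continuous_on:
  assumes "h \<in> W22"
  shows "continuous_on {0..1} (d1 h)"
proof -
  obtain g where g: "g absolutely_integrable_on {0..1}"
    and rep: "\<And>t. t \<in> {0..1} \<Longrightarrow> d1 h 0 + integral {0..t} g = d1 h t"
    using W22_d1_eq_integral[OF assms] by blast
  have "continuous_on {0..1} (\<lambda>t. integral {0..t} g)"
    using g unfolding absolutely_integrable_on_def by (intro indefinite_integral_continuous_1) simp
  then have "continuous_on {0..1} (\<lambda>t. d1 h 0 + integral {0..t} g)"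
    by (intro continuous_on_add continuous_on_const)
  then show ?thesis
    by (rule continuous_on_eq) (rule rep)
qed

text \<open>The W22 condition only provides d1 h as an indefinite integral of some g; Lebesgue
  differentiation identifies g with the pointwise derivative d2 h almost everywhere.\<close>
lemma W22_d2_ae:
  assumes "h \<in> W22"
  obtains g N where "negligible N" "(\<lambda>t. (norm (g t))\<^sup>2) integrable_on {0..1}"
    "\<And>t. t \<in> {0..1} - N \<Longrightarrow> (d1 h has_vector_derivative g t) (at t)"
proof -
  obtain g where g: "g absolutely_integrable_on {0..1}"
    and g2: "(\<lambda>t. (norm (g t))\<^sup>2) integrable_on {0..1}"
    and rep: "\<And>t. t \<in> {0..1} \<Longrightarrow> d1 h 0 + integral {0..t} g = d1 h t"
    using W22_d1_eq_integral[OF assms] by blast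
  obtain N where N: "negligible N" and der: "\<And>t. t \<in> {0<..<1} - N \<Longrightarrow>
      ((\<lambda>t. integral {0..t} g) has_vector_derivative g t) (at t)"
    using indefinite_integral_has_vector_derivative_ae set_lebesgue_integral_eq_integral(1)[OF g]
    by blast
  have "(d1 h has_vector_derivative g t) (at t)" if t: "t \<in> {0..1} - insert 0 (insert 1 N)" for t
  proof (rule has_vector_derivative_transform_within_open[where S="{0<..<1}"])
    have "((\<lambda>t. d1 h 0 + integral {0..t} g) has_vector_derivative 0 + g t) (at t)"
      using t by (intro has_vector_derivative_add has_vector_derivative_const der) auto
    then show "((\<lambda>t. d1 h 0 + integral {0..t} g) has_vector_derivative g t) (at t)"
      by simp
  qed (use t rep in auto)
  with N g2 show ?thesis
    by (intro that[of "insert 0 (insert 1 N)" g]) auto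
qed

lemma W22_scaleR:
  assumes "h \<in> W22"
  shows "(\<lambda>x. c *\<^sub>R h x) \<in> W22"
proof -
  obtain g where g: "g absolutely_integrable_on {0..1}"
    and g2: "(\<lambda>t. (norm (g t))\<^sup>2) integrable_on {0..1}"
    and rep: "\<And>t. t \<in> {0..1} \<Longrightarrow> d1 h 0 + integral {0..t} g = d1 h t"
    using W22_d1_eq_integral[OF assms] by blast
  have diff: "\<And>t. h differentiable (at t)"
    using assms by (rule W22_differentiable)
  have "(\<lambda>t. c *\<^sub>R g t) absolutely_integrable_on {0..1}"
    using g by (simp add: absolutely_integrable_on_scaleR_iff)
  moreover have "(\<lambda>t. (norm (c *\<^sub>R g t))\<^sup>2) integrable_on {0..1}"
    using integrable_on_cmult_left[OF g2, of "c\<^sup>2"] by (simp add: power_mult_distrib)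
  moreover have "\<forall>t\<in>{0..1}. d1 (\<lambda>x. c *\<^sub>R h x) t
      = d1 (\<lambda>x. c *\<^sub>R h x) 0 + integral {0..t} (\<lambda>t. c *\<^sub>R g t)"
    using rep by (simp add: d1_scaleR[OF diff] flip: scaleR_add_right)
  ultimately have "\<exists>g. g absolutely_integrable_on {0..1} \<and> (\<lambda>t. (norm (g t))\<^sup>2) integrable_on {0..1}
      \<and> (\<forall>t\<in>{0..1}. d1 (\<lambda>x. c *\<^sub>R h x) t = d1 (\<lambda>x. c *\<^sub>R h x) 0 + integral {0..t} g)"
    by blast
  moreover have "(\<lambda>x. c *\<^sub>R h x) differentiable (at t)" for t
    using has_vector_derivative_scaleR_const[OF has_vector_derivative_d1[OF diff]]
    by (rule differentiableI_vector)
  moreover have "c *\<^sub>R h (t + 1) = c *\<^sub>R h t" for t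
    using assms by (simp add: W22_def)
  ultimately show ?thesis
    unfolding W22_def by blast
qed

definition W22_integrand :: "curve \<Rightarrow> real \<Rightarrow> real" where
  "W22_integrand h t = (norm (h t))\<^sup>2 + (norm (d1 h t))\<^sup>2 + (norm (d2 h t))\<^sup>2"

lemma W22_norm_eq: "W22_norm h = sqrt (integral {0..1} (W22_integrand h))"
  unfolding W22_norm_def W22_integrand_def ..

lemma W22_integrand_integrable:
  assumes "h \<in> W22"
  shows "W22_integrand h integrable_on {0..1}"
proof -
  obtain g N where N: "negligible N" and g2: "(\<lambda>t. (norm (g t))\<^sup>2) integrable_on {0..1}"
    and der: "\<And>t. t \<in> {0..1} - N \<Longrightarrow> (d1 h has_vector_derivative g t) (at t)"
    using W22_d2_ae[OF assms] by blast
  have d2: "d2 h t = g t" if "t \<in> {0..1} - N" for t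
    using der[OF that] by (rule d2_eqI)
  have h_cont: "continuous_on {0..1} h"
    using assms by (intro continuous_at_imp_continuous_on differentiable_imp_continuous_within
        ballI W22_differentiable)
  have "(\<lambda>t. (norm (h t))\<^sup>2 + (norm (d1 h t))\<^sup>2) integrable_on {0..1}"
    by (intro integrable_continuous_interval continuous_intros h_cont
        W22_d1_continuous_on[OF assms])
  then have "(\<lambda>t. (norm (h t))\<^sup>2 + (norm (d1 h t))\<^sup>2 + (norm (g t))\<^sup>2) integrable_on {0..1}"
    using g2 by (rule integrable_add)
  then show ?thesis
    by (rule integrable_spike[OF _ N]) (simp add: W22_integrand_def d2)
qed

lemma W22_norm_sq:
  assumes "h \<in> W22"
  shows "(W22_norm h)\<^sup>2 = integral {0..1} (W22_integrand h)"
  unfolding W22_norm_eq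
  by (intro real_sqrt_pow2 integral_nonneg W22_integrand_integrable assms)
    (simp add: W22_integrand_def)

lemma W22_norm_nonneg: "h \<in> W22 \<Longrightarrow> 0 \<le> W22_norm h"
  by (metis W22_norm_sq W22_norm_eq real_sqrt_ge_zero zero_le_power2)

lemma W22_norm_scaleR:
  assumes "h \<in> W22"
  shows "W22_norm (\<lambda>x. c *\<^sub>R h x) = \<bar>c\<bar> * W22_norm h"
proof -
  obtain g N where N: "negligible N"
    and der: "\<And>t. t \<in> {0..1} - N \<Longrightarrow> (d1 h has_vector_derivative g t) (at t)"
    using W22_d2_ae[OF assms] by blast
  have diff: "\<And>t. h differentiable (at t)"
    using assms by (rule W22_differentiable)
  have "integral {0..1} (W22_integrand (\<lambda>x. c *\<^sub>R h x))
      = integral {0..1} (\<lambda>t. c\<^sup>2 * W22_integrand h t)"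
  proof (rule integral_spike[OF N])
    fix t assume t: "t \<in> {0..1} - N"
    show "c\<^sup>2 * W22_integrand h t = W22_integrand (\<lambda>x. c *\<^sub>R h x) t"
      unfolding W22_integrand_def d1_scaleR[OF diff] d2_scaleR_eqI[OF diff der[OF t]]
        d2_eqI[OF der[OF t]]
      by (simp add: algebra_simps)
  qed
  also have "\<dots> = c\<^sup>2 * integral {0..1} (W22_integrand h)"
    by (rule Henstock_Kurzweil_Integration.integral_mult_right)
  finally show ?thesis
    unfolding W22_norm_eq by (simp add: real_sqrt_mult)
qed

lemma integral_d1_norm_sq_le:
  assumes "h \<in> W22"
  shows "integral {0..1} (\<lambda>t. (norm (d1 h t))\<^sup>2) \<le> (W22_norm h)\<^sup>2"
  unfolding W22_norm_sq[OF assms]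
  by (intro Henstock_Kurzweil_Integration.integral_le W22_integrand_integrable assms
      integrable_continuous_interval continuous_intros W22_d1_continuous_on)
    (simp add: W22_integrand_def)

lemma square_integral_le_integral_square:
  fixes u :: "real \<Rightarrow> real"
  assumes u: "u integrable_on {0..1}" and u2: "(\<lambda>t. (u t)\<^sup>2) integrable_on {0..1}"
  shows "(integral {0..1} u)\<^sup>2 \<le> integral {0..1} (\<lambda>t. (u t)\<^sup>2)"
proof -
  define X where "X = integral {0..1} u"
  have expand: "(\<lambda>t. (u t - X)\<^sup>2) = (\<lambda>t. ((u t)\<^sup>2 - (2 * X) * u t) + X\<^sup>2)"
    by (auto simp: power2_eq_square algebra_simps)
  have int: "(\<lambda>t. (u t)\<^sup>2 - (2 * X) * u t) integrable_on {0..1}"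
    using integrable_on_cmult_left[OF u, of "2 * X"] u2
    by (intro Henstock_Kurzweil_Integration.integrable_diff) simp_all
  have "(\<lambda>t. (u t - X)\<^sup>2) integrable_on {0..1}"
    unfolding expand by (intro integrable_add int) auto
  then have "0 \<le> integral {0..1} (\<lambda>t. (u t - X)\<^sup>2)"
    by (rule integral_nonneg) simp
  also have "\<dots> = integral {0..1} (\<lambda>t. (u t)\<^sup>2 - (2 * X) * u t) + X\<^sup>2"
    unfolding expand by (subst integral_add) (use int in auto)
  also have "\<dots> = integral {0..1} (\<lambda>t. (u t)\<^sup>2) - X\<^sup>2"
    using integrable_on_cmult_left[OF u, of "2 * X"] u2
    by (simp add: Henstock_Kurzweil_Integration.integral_diff X_def power2_eq_square)
  finally show ?thesis unfolding X_def by simp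
qed

lemma integral_d1_norm_le:
  assumes "h \<in> W22"
  shows "integral {0..1} (\<lambda>t. norm (d1 h t)) \<le> W22_norm h"
proof (rule power2_le_imp_le)
  have "(integral {0..1} (\<lambda>t. norm (d1 h t)))\<^sup>2 \<le> integral {0..1} (\<lambda>t. (norm (d1 h t))\<^sup>2)"
    by (intro square_integral_le_integral_square integrable_continuous_interval continuous_intros
        W22_d1_continuous_on[OF assms])
  also have "\<dots> \<le> (W22_norm h)\<^sup>2"
    by (rule integral_d1_norm_sq_le[OF assms])
  finally show "(integral {0..1} (\<lambda>t. norm (d1 h t)))\<^sup>2 \<le> (W22_norm h)\<^sup>2" .
qed (rule W22_norm_nonneg[OF assms])

section \<open>Frechet derivatives on W22\<close>

lemma has_frechet_W22_scaleR:
  assumes "has_frechet_W22 F \<gamma> A" "h \<in> W22"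
  shows "A (\<lambda>x. c *\<^sub>R h x) = c * A h"
proof -
  have "A (\<lambda>x. c *\<^sub>R h x + 0 *\<^sub>R h x) = c * A h + 0 * A h"
    using assms unfolding has_frechet_W22_def by blast
  then show ?thesis
    by simp
qed

lemma has_frechet_W22_remainder:
  assumes "has_frechet_W22 F \<gamma> A" "\<epsilon> > 0"
  obtains \<delta> where "\<delta> > 0" "\<And>h. h \<in> W22 \<Longrightarrow> W22_norm h < \<delta> \<Longrightarrow>
      \<bar>F (\<lambda>x. \<gamma> x + h x) - F \<gamma> - A h\<bar> \<le> \<epsilon> * W22_norm h"
  using assms unfolding has_frechet_W22_def by blast

lemma frechet_differentiable_W22_FD:
  "frechet_differentiable_W22 F \<gamma> \<Longrightarrow> has_frechet_W22 F \<gamma> (FD F \<gamma>)"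
  using someI_ex[of "has_frechet_W22 F \<gamma>"] unfolding frechet_differentiable_W22_def FD_def .

lemma has_frechet_W22_directional_derivative:
  assumes A: "has_frechet_W22 F \<gamma> A" and h: "h \<in> W22"
  shows "((\<lambda>t. F (\<lambda>x. \<gamma> x + t *\<^sub>R h x)) has_real_derivative A h) (at 0 within {0<..})"
  unfolding has_field_derivative_iff
proof (rule tendstoI)
  fix e :: real assume "e > 0"
  define n where "n = W22_norm h"
  have n: "0 \<le> n"
    unfolding n_def using h by (rule W22_norm_nonneg)
  have "e / (n + 1) > 0"
    using \<open>e > 0\<close> n by simp
  then obtain \<delta> where "\<delta> > 0" and rem: "\<And>k. k \<in> W22 \<Longrightarrow> W22_norm k < \<delta> \<Longrightarrow>
      \<bar>F (\<lambda>x. \<gamma> x + k x) - F \<gamma> - A k\<bar> \<le> e / (n + 1) * W22_norm k"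
    using has_frechet_W22_remainder[OF A] by blast
  have "\<bar>(F (\<lambda>x. \<gamma> x + t *\<^sub>R h x) - F \<gamma>) / t - A h\<bar> < e"
    if t: "0 < t" "t < \<delta> / (n + 1)" for t
  proof -
    define D where "D = F (\<lambda>x. \<gamma> x + t *\<^sub>R h x) - F \<gamma>"
    have norm_th: "W22_norm (\<lambda>x. t *\<^sub>R h x) = t * n"
      using W22_norm_scaleR[OF h, of t] t by (simp add: n_def)
    have "t * n < \<delta>"
      using t n by (simp add: field_simps)
    then have "\<bar>D - A (\<lambda>x. t *\<^sub>R h x)\<bar> \<le> e / (n + 1) * (t * n)"
      using rem[OF W22_scaleR[OF h], of t] norm_th by (simp add: D_def)
    then have bound: "\<bar>D - t * A h\<bar> \<le> t * (e * n / (n + 1))"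
      unfolding has_frechet_W22_scaleR[OF A h] by (simp add: algebra_simps)
    have "D / t - A h = (D - t * A h) / t"
      using t by (simp add: field_simps)
    then have "\<bar>D / t - A h\<bar> \<le> e * n / (n + 1)"
      using bound t by (simp add: abs_divide pos_divide_le_eq mult.commute)
    also have "\<dots> < e"
      using \<open>e > 0\<close> n by (simp add: field_simps)
    finally show ?thesis
      unfolding D_def .
  qed
  moreover have "\<delta> / (n + 1) > 0"
    using \<open>\<delta> > 0\<close> n by simp
  ultimately show "\<forall>\<^sub>F t in at 0 within {0<..}.
      dist ((F (\<lambda>x. \<gamma> x + t *\<^sub>R h x) - F (\<lambda>x. \<gamma> x + 0 *\<^sub>R h x)) / (t - 0)) (A h) < e"
    unfolding eventually_at_right_field dist_real_def by (intro exI[of _ "\<delta> / (n + 1)"]) auto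
qed

lemma has_real_derivative_at_right_unique:
  fixes f :: "real \<Rightarrow> real"
  assumes "(f has_real_derivative a) (at x within {x<..})"
    and "(f has_real_derivative b) (at x within {x<..})"
  shows "a = b"
  using tendsto_unique[of "at_right x"] assms unfolding has_field_derivative_iff by auto

lemma has_frechet_W22_mult_eq:
  assumes C: "has_frechet_W22 (\<lambda>\<gamma>. F \<gamma> * G \<gamma>) \<gamma> C"
    and A: "has_frechet_W22 F \<gamma> A" and B: "has_frechet_W22 G \<gamma> B" and h: "h \<in> W22"
  shows "C h = A h * G \<gamma> + B h * F \<gamma>"
proof (rule has_real_derivative_at_right_unique)
  show "((\<lambda>t. F (\<lambda>x. \<gamma> x + t *\<^sub>R h x) * G (\<lambda>x. \<gamma> x + t *\<^sub>R h x))
      has_real_derivative C h) (at 0 within {0<..})"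
    using has_frechet_W22_directional_derivative[OF C h] .
  show "((\<lambda>t. F (\<lambda>x. \<gamma> x + t *\<^sub>R h x) * G (\<lambda>x. \<gamma> x + t *\<^sub>R h x))
      has_real_derivative A h * G \<gamma> + B h * F \<gamma>) (at 0 within {0<..})"
    using DERIV_mult[OF has_frechet_W22_directional_derivative[OF A h]
        has_frechet_W22_directional_derivative[OF B h]] by simp
qed

lemma has_frechet_W22_homogeneous:
  assumes A: "has_frechet_W22 F \<gamma> A" and "\<gamma> \<in> W22"
    and hom: "\<And>c. c > 0 \<Longrightarrow> F (\<lambda>x. c *\<^sub>R \<gamma> x) = c powr p * F \<gamma>"
  shows "A \<gamma> = p * F \<gamma>"
proof (rule has_real_derivative_at_right_unique)
  show "((\<lambda>t. F (\<lambda>x. \<gamma> x + t *\<^sub>R \<gamma> x)) has_real_derivative A \<gamma>) (at 0 within {0<..})"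
    using has_frechet_W22_directional_derivative[OF A \<open>\<gamma> \<in> W22\<close>] .
  have "((\<lambda>t. (1 + t) powr p * F \<gamma>) has_real_derivative p * F \<gamma>) (at 0 within {0<..})"
    by (auto intro!: derivative_eq_intros)
  moreover have "(\<lambda>x. \<gamma> x + t *\<^sub>R \<gamma> x) = (\<lambda>x. (1 + t) *\<^sub>R \<gamma> x)" for t
    by (simp add: algebra_simps)
  then have "\<forall>\<^sub>F t in at 0 within {0<..}. (1 + t) powr p * F \<gamma> = F (\<lambda>x. \<gamma> x + t *\<^sub>R \<gamma> x)"
    unfolding eventually_at_right_field by (auto simp: hom intro!: exI[of _ 1])
  ultimately show "((\<lambda>t. F (\<lambda>x. \<gamma> x + t *\<^sub>R \<gamma> x)) has_real_derivative p * F \<gamma>) (at 0 within {0<..})"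
    by (subst (asm) has_field_derivative_cong_eventually) simp_all
qed

section \<open>Length and energies\<close>

lemma norm_add_unit_expansion:
  fixes a b :: "'a::real_inner"
  assumes a: "norm a = 1"
  shows "\<bar>norm (a + b) - 1 - a \<bullet> b\<bar> \<le> (norm b)\<^sup>2 / 2"
proof -
  have aa: "a \<bullet> a = 1"
    using a by (simp add: dot_square_norm)
  have sq: "(norm (a + b))\<^sup>2 = 1 + 2 * (a \<bullet> b) + (norm b)\<^sup>2"
    unfolding power2_norm_eq_inner by (simp add: inner_add_left inner_add_right inner_commute aa)
  have lower: "1 + a \<bullet> b \<le> norm (a + b)"
    using Cauchy_Schwarz_ineq2[of a "a + b"] a aa by (simp add: inner_add_right)
  have "\<bar>a \<bullet> b\<bar> \<le> norm b"
    using Cauchy_Schwarz_ineq2[of a b] a by simp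
  then have "0 \<le> 1 + a \<bullet> b + (norm b)\<^sup>2 / 2"
    using sum_power2_ge_zero[of "norm b - 1" 1] by (simp add: power2_eq_square algebra_simps)
  moreover have "(1 + a \<bullet> b + (norm b)\<^sup>2 / 2)\<^sup>2 = (norm (a + b))\<^sup>2 + (a \<bullet> b + (norm b)\<^sup>2 / 2)\<^sup>2"
    unfolding sq by (simp add: power2_eq_square algebra_simps)
  then have "(norm (a + b))\<^sup>2 \<le> (1 + a \<bullet> b + (norm b)\<^sup>2 / 2)\<^sup>2"
    by simp
  ultimately have "norm (a + b) \<le> 1 + a \<bullet> b + (norm b)\<^sup>2 / 2"
    by (rule power2_le_imp_le[rotated])
  with lower show ?thesis
    by linarith
qed

lemma curve_length_remainder_le:
  assumes \<Gamma>: "\<Gamma> \<in> W22" "arclength_param \<Gamma>" and h: "h \<in> W22"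
  shows "\<bar>curve_length (\<lambda>t. \<Gamma> t + h t) - curve_length \<Gamma> - integral {0..1} (\<lambda>t. d1 \<Gamma> t \<bullet> d1 h t)\<bar>
    \<le> (W22_norm h)\<^sup>2 / 2"
proof -
  have unit: "norm (d1 \<Gamma> t) = 1" for t
    using \<Gamma>(2) unfolding arclength_param_def by simp
  have cont: "continuous_on {0..1} (d1 \<Gamma>)" "continuous_on {0..1} (d1 h)"
    using \<Gamma>(1) h by (simp_all add: W22_d1_continuous_on)
  have "curve_length (\<lambda>t. \<Gamma> t + h t) - curve_length \<Gamma> - integral {0..1} (\<lambda>t. d1 \<Gamma> t \<bullet> d1 h t)
      = integral {0..1} (\<lambda>t. norm (d1 \<Gamma> t + d1 h t) - 1 - d1 \<Gamma> t \<bullet> d1 h t)"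
    unfolding curve_length_def d1_add[OF W22_differentiable[OF \<Gamma>(1)] W22_differentiable[OF h]] unit
    by (simp add: Henstock_Kurzweil_Integration.integral_diff
        Henstock_Kurzweil_Integration.integrable_diff integrable_continuous_interval
        continuous_intros cont)
  also have "\<bar>\<dots>\<bar> \<le> integral {0..1} (\<lambda>t. (norm (d1 h t))\<^sup>2 / 2)"
    using integral_norm_bound_integral[of "\<lambda>t. norm (d1 \<Gamma> t + d1 h t) - 1 - d1 \<Gamma> t \<bullet> d1 h t"
        "{0..1}" "\<lambda>t. (norm (d1 h t))\<^sup>2 / 2"] norm_add_unit_expansion[OF unit]
    by (simp add: integrable_continuous_interval continuous_intros cont)
  also have "\<dots> = integral {0..1} (\<lambda>t. (norm (d1 h t))\<^sup>2) / 2"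
    by simp
  also have "\<dots> \<le> (W22_norm h)\<^sup>2 / 2"
    using integral_d1_norm_sq_le[OF h] by simp
  finally show ?thesis .
qed

lemma has_frechet_W22_curve_length:
  assumes \<Gamma>: "\<Gamma> \<in> W22" "arclength_param \<Gamma>"
  shows "has_frechet_W22 curve_length \<Gamma> (\<lambda>h. integral {0..1} (\<lambda>t. d1 \<Gamma> t \<bullet> d1 h t))"
proof -
  define A where "A = (\<lambda>h. integral {0..1} (\<lambda>t. d1 \<Gamma> t \<bullet> d1 h t))"
  have unit: "norm (d1 \<Gamma> t) = 1" for t
    using \<Gamma>(2) unfolding arclength_param_def by simp
  have cont: "continuous_on {0..1} (d1 h)" if "h \<in> W22" for h
    using that by (rule W22_d1_continuous_on)
  have linear: "A (\<lambda>t. a *\<^sub>R h t + b *\<^sub>R k t) = a * A h + b * A k"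
    if h: "h \<in> W22" and k: "k \<in> W22" for h k a b
  proof -
    have diff: "\<And>t. (\<lambda>x. a *\<^sub>R h x) differentiable (at t)"
      "\<And>t. (\<lambda>x. b *\<^sub>R k x) differentiable (at t)"
      using h k by (simp_all add: W22_differentiable W22_scaleR)
    show ?thesis
      unfolding A_def d1_add[OF diff] d1_scaleR[OF W22_differentiable[OF h]]
        d1_scaleR[OF W22_differentiable[OF k]]
      by (simp add: inner_add_right integral_add integrable_continuous_interval continuous_intros
          cont h k \<Gamma>(1))
  qed
  have bounded: "\<bar>A h\<bar> \<le> 1 * W22_norm h" if h: "h \<in> W22" for h
  proof -
    have "\<bar>A h\<bar> \<le> integral {0..1} (\<lambda>t. norm (d1 h t))"
      using integral_norm_bound_integral[of "\<lambda>t. d1 \<Gamma> t \<bullet> d1 h t" "{0..1}" "\<lambda>t. norm (d1 h t)"]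
        Cauchy_Schwarz_ineq2[of "d1 \<Gamma> _" "d1 h _"] unit
      by (simp add: A_def integrable_continuous_interval continuous_intros cont h \<Gamma>(1))
    also have "\<dots> \<le> W22_norm h"
      by (rule integral_d1_norm_le[OF h])
    finally show ?thesis by simp
  qed
  have remainder: "\<bar>curve_length (\<lambda>t. \<Gamma> t + h t) - curve_length \<Gamma> - A h\<bar> \<le> \<epsilon> * W22_norm h"
    if h: "h \<in> W22" and small: "W22_norm h < 2 * \<epsilon>" for h \<epsilon>
  proof -
    have "W22_norm h * W22_norm h \<le> (2 * \<epsilon>) * W22_norm h"
      using small W22_norm_nonneg[OF h] by (intro mult_right_mono) auto
    then have "(W22_norm h)\<^sup>2 / 2 \<le> \<epsilon> * W22_norm h"
      by (simp add: power2_eq_square)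
    with curve_length_remainder_le[OF \<Gamma> h] show ?thesis
      unfolding A_def by linarith
  qed
  have "has_frechet_W22 curve_length \<Gamma> A"
    unfolding has_frechet_W22_def
  proof (intro conjI)
    show "\<forall>\<epsilon>>0. \<exists>\<delta>>0. \<forall>h\<in>W22. W22_norm h < \<delta> \<longrightarrow>
        \<bar>curve_length (\<lambda>t. \<Gamma> t + h t) - curve_length \<Gamma> - A h\<bar> \<le> \<epsilon> * W22_norm h"
      using remainder by (intro allI impI exI[of _ "2 * _"]) auto
  qed (use linear bounded in blast)+
  then show ?thesis
    unfolding A_def .
qed

lemma curve_length_scaleR:
  assumes "\<And>t. \<Gamma> differentiable (at t)" and "c > 0"
  shows "curve_length (\<lambda>x. c *\<^sub>R \<Gamma> x) = c * curve_length \<Gamma>"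
  unfolding curve_length_def d1_scaleR[OF assms(1)] using assms(2) by simp

lemma bending_density_scaleR:
  fixes a b :: "real^3"
  assumes "c > 0"
  shows "(norm (cross3 (c *\<^sub>R a) (c *\<^sub>R b)) / norm (c *\<^sub>R a) ^ 3)\<^sup>2 * norm (c *\<^sub>R a)
       = (norm (cross3 a b) / norm a ^ 3)\<^sup>2 * norm a / c"
proof (cases "a = 0")
  case False
  then show ?thesis
    using assms
    by (simp add: cross_mult_left cross_mult_right field_simps power2_eq_square eval_nat_numeral)
qed simp

lemma bending_scaleR:
  assumes "\<Gamma> \<in> W22" and "c > 0"
  shows "bending (\<lambda>x. c *\<^sub>R \<Gamma> x) = bending \<Gamma> / c"
proof -
  obtain g N where N: "negligible N"
    and der: "\<And>t. t \<in> {0..1} - N \<Longrightarrow> (d1 \<Gamma> has_vector_derivative g t) (at t)"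
    using W22_d2_ae[OF assms(1)] by blast
  have diff: "\<And>t. \<Gamma> differentiable (at t)"
    using assms(1) by (rule W22_differentiable)
  have "bending (\<lambda>x. c *\<^sub>R \<Gamma> x) = integral {0..1}
      (\<lambda>t. (norm (cross3 (d1 \<Gamma> t) (d2 \<Gamma> t)) / norm (d1 \<Gamma> t) ^ 3)\<^sup>2 * norm (d1 \<Gamma> t) / c)"
    unfolding bending_def
  proof (rule integral_spike[OF N])
    fix t assume t: "t \<in> {0..1} - N"
    show "(norm (cross3 (d1 \<Gamma> t) (d2 \<Gamma> t)) / norm (d1 \<Gamma> t) ^ 3)\<^sup>2 * norm (d1 \<Gamma> t) / c
      = (norm (cross3 (d1 (\<lambda>x. c *\<^sub>R \<Gamma> x) t) (d2 (\<lambda>x. c *\<^sub>R \<Gamma> x) t))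
          / norm (d1 (\<lambda>x. c *\<^sub>R \<Gamma> x) t) ^ 3)\<^sup>2 * norm (d1 (\<lambda>x. c *\<^sub>R \<Gamma> x) t)"
      unfolding d1_scaleR[OF diff] d2_scaleR_eqI[OF diff der[OF t]] d2_eqI[OF der[OF t]]
      by (rule bending_density_scaleR[OF assms(2), symmetric])
  qed
  also have "\<dots> = bending \<Gamma> / c"
    unfolding bending_def by (rule Henstock_Kurzweil_Integration.integral_divide)
  finally show ?thesis .
qed

lemma inv_rtp_scaleR:
  assumes "\<And>t. \<Gamma> differentiable (at t)" and "c > 0"
  shows "inv_rtp (\<lambda>x. c *\<^sub>R \<Gamma> x) s t = inv_rtp \<Gamma> s t / c"
proof -
  define v where "v = \<Gamma> t - \<Gamma> s"
  have "c *\<^sub>R \<Gamma> t - c *\<^sub>R \<Gamma> s = c *\<^sub>R v"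
    unfolding v_def by (simp add: scaleR_diff_right)
  then show ?thesis
    unfolding inv_rtp_def d1_scaleR[OF assms(1)] v_def[symmetric]
    using assms(2) by (cases "d1 \<Gamma> s = 0 \<or> v = 0")
      (auto simp: cross_mult_left cross_mult_right power2_eq_square field_simps)
qed

lemma tangent_point_scaleR:
  assumes "\<And>t. \<Gamma> differentiable (at t)" and "c > 0"
  shows "tangent_point q (\<lambda>x. c *\<^sub>R \<Gamma> x) = c powr (2 - q) * tangent_point q \<Gamma>"
proof -
  have "inv_rtp (\<lambda>x. c *\<^sub>R \<Gamma> x) s t powr q * norm (d1 (\<lambda>x. c *\<^sub>R \<Gamma> x) s)
        * norm (d1 (\<lambda>x. c *\<^sub>R \<Gamma> x) t)
      = c powr (2 - q) * (inv_rtp \<Gamma> s t powr q * norm (d1 \<Gamma> s) * norm (d1 \<Gamma> t))" for s t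
    unfolding inv_rtp_scaleR[OF assms] d1_scaleR[OF assms(1)] powr_divide powr_diff
    using assms(2) by (simp add: powr_numeral power2_eq_square)
  then show ?thesis
    unfolding tangent_point_def case_prod_beta
    by (simp add: Henstock_Kurzweil_Integration.integral_mult_right)
qed

lemma E_theta_scaleR:
  assumes "q \<noteq> 2" and "\<Gamma> \<in> W22" and "c > 0"
  shows "E_theta q \<theta> (\<lambda>x. c *\<^sub>R \<Gamma> x) = E_theta q \<theta> \<Gamma> / c"
proof -
  have "(2 - q) * (1 / (q - 2)) = - 1"
    using assms(1) by (simp add: field_simps)
  then have "(c powr (2 - q)) powr (1 / (q - 2)) = 1 / c"
    using assms(3) by (simp only: powr_powr powr_neg_one)
  then show ?thesis
    unfolding E_theta_def bending_scaleR[OF assms(2,3)]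
      tangent_point_scaleR[OF W22_differentiable[OF assms(2)] assms(3)] powr_mult
    by (simp add: add_divide_distrib)
qed

theorem corollary4p3:
  fixes q \<theta> :: real and \<Gamma> :: curve and K :: "curve set"
  assumes q: "2 < q" "q \<le> 4" and th: "\<theta> > 0"
    and irc: "injective_regular_closed \<Gamma>" and al: "arclength_param \<Gamma>"
    and diffE: "frechet_differentiable_W22 (E_theta q \<theta>) \<Gamma>"
  shows "((\<exists>A. has_frechet_W22 (S_theta q \<theta>) \<Gamma> A \<and> (\<forall>h\<in>W22. A h = 0))
          \<longrightarrow> (\<forall>h\<in>W22. FD (E_theta q \<theta>) \<Gamma> h
                 + E_theta q \<theta> \<Gamma> * FD curve_length \<Gamma> h = 0))
       \<and> ((\<Gamma> \<in> admissible_class K \<and>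
            (\<exists>\<mu>. \<forall>h\<in>W22. FD (E_theta q \<theta>) \<Gamma> h + \<mu> * FD curve_length \<Gamma> h = 0))
          \<longrightarrow> (\<forall>h\<in>W22. FD (E_theta q \<theta>) \<Gamma> h
                 + E_theta q \<theta> \<Gamma> * FD curve_length \<Gamma> h = 0))"
proof -
  let ?E = "E_theta q \<theta>" and ?L = curve_length
  have \<Gamma>: "\<Gamma> \<in> W22"
    using irc unfolding injective_regular_closed_def by simp
  have L1: "?L \<Gamma> = 1"
    using al unfolding arclength_param_def curve_length_def by simp
  have "frechet_differentiable_W22 ?L \<Gamma>"
    unfolding frechet_differentiable_W22_def using has_frechet_W22_curve_length[OF \<Gamma> al] by blast
  then have DL: "has_frechet_W22 ?L \<Gamma> (FD ?L \<Gamma>)"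
    by (rule frechet_differentiable_W22_FD)
  have DE: "has_frechet_W22 ?E \<Gamma> (FD ?E \<Gamma>)"
    using diffE by (rule frechet_differentiable_W22_FD)
  have "FD ?E \<Gamma> h + ?E \<Gamma> * FD ?L \<Gamma> h = 0"
    if A: "has_frechet_W22 (S_theta q \<theta>) \<Gamma> A" "\<forall>h\<in>W22. A h = 0" and h: "h \<in> W22" for A h
  proof -
    have "has_frechet_W22 (\<lambda>\<gamma>. ?L \<gamma> * ?E \<gamma>) \<Gamma> A"
      using A(1) by (simp add: S_theta_def[abs_def])
    then have "A h = FD ?L \<Gamma> h * ?E \<Gamma> + FD ?E \<Gamma> h * ?L \<Gamma>"
      by (rule has_frechet_W22_mult_eq[OF _ DL DE h])
    with A(2) h L1 show ?thesis
      by (simp add: algebra_simps)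
  qed
  moreover have "\<mu> = ?E \<Gamma>" if "\<forall>h\<in>W22. FD ?E \<Gamma> h + \<mu> * FD ?L \<Gamma> h = 0" for \<mu>
  proof -
    have "FD ?E \<Gamma> \<Gamma> = - 1 * ?E \<Gamma>"
      using q(1) E_theta_scaleR[OF _ \<Gamma>]
      by (intro has_frechet_W22_homogeneous[OF DE \<Gamma>]) (simp add: powr_neg_one)
    moreover have "FD ?L \<Gamma> \<Gamma> = 1 * ?L \<Gamma>"
      using curve_length_scaleR[OF W22_differentiable[OF \<Gamma>]]
      by (intro has_frechet_W22_homogeneous[OF DL \<Gamma>]) simp
    ultimately show ?thesis
      using that \<Gamma> L1 by auto
  qed
  ultimately show ?thesis
    by blast
qed

end
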